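(* Let $1/2<H<1$, let $Z$ be a continuous fractional Brownian motion with Hurst parameter $H$, let $\alpha>0$, $a_t:=H\mathrm{e}^{\alpha t/H}/\alpha$, and $Y^{(\alpha)}_t:=\int_0^t\mathrm{e}^{-\alpha s}\,dZ_{a_s}$ (pathwise Riemann–Stieltjes integral), $t\ge0$. Then for $t_2>t_1\ge0$ and $s_2>s_1\ge0$, $$\mathbf{E}\Big(\big(Y^{(\alpha)}_{t_2}-Y^{(\alpha)}_{t_1}\big)\big(Y^{(\alpha)}_{s_2}-Y^{(\alpha)}_{s_1}\big)\Big)=C(\alpha,H)\int_{t_1}^{t_2}\int_{s_1}^{s_2}\frac{\mathrm{e}^{-\alpha(1-H)(u-v)/H}}{|1-\mathrm{e}^{-\alpha(u-v)/H}|^{2(1-H)}}\,dv\,du,$$ where $C(\alpha,H):=H(2H-1)(\alpha/H)^{2(1-H)}$. Moreover the kernel $$r_{\alpha,H}(u,v):=C(\alpha,H)\frac{\mathrm{e}^{-\alpha(1-H)(u-v)/H}}{|1-\mathrm{e}^{-\alpha(u-v)/H}|^{2(1-H)}}$$ is symmetric: $r_{\alpha,H}(u,v)=r_{\alpha,H}(v,u)$ for all $u,v\in\mathbf{R}$.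
   Context: A fractional Brownian motion with Hurst parameter $H$ is a centered Gaussian process on $[0,\infty)$ with covariance $\frac12(t^{2H}+s^{2H}-|t-s|^{2H})$. *)

theory Defs
  imports "HOL-Probability.Probability"
begin

definition rs_tagged_partition :: "real \<Rightarrow> real \<Rightarrow> real list \<Rightarrow> real list \<Rightarrow> bool" where
  "rs_tagged_partition a b xs ts \<longleftrightarrow>
     length xs \<ge> 2 \<and> sorted xs \<and> hd xs = a \<and> last xs = b \<and>
     length ts = length xs - 1 \<and>
     (\<forall>i < length ts. xs ! i \<le> ts ! i \<and> ts ! i \<le> xs ! (Suc i))"

definition rs_mesh_less :: "real list \<Rightarrow> real \<Rightarrow> bool" where
  "rs_mesh_less xs d \<longleftrightarrow> (\<forall>i. Suc i < length xs \<longrightarrow> xs ! (Suc i) - xs ! i < d)"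

definition rs_sum :: "(real \<Rightarrow> real) \<Rightarrow> (real \<Rightarrow> real) \<Rightarrow> real list \<Rightarrow> real list \<Rightarrow> real" where
  "rs_sum f g xs ts = (\<Sum>i < length ts. f (ts ! i) * (g (xs ! Suc i) - g (xs ! i)))"

definition has_rs_integral :: "(real \<Rightarrow> real) \<Rightarrow> (real \<Rightarrow> real) \<Rightarrow> real \<Rightarrow> real \<Rightarrow> real \<Rightarrow> bool" where
  "has_rs_integral f g a b I \<longleftrightarrow>
     (\<forall>e > 0. \<exists>d > 0. \<forall>xs ts. rs_tagged_partition a b xs ts \<and> rs_mesh_less xs d
        \<longrightarrow> \<bar>rs_sum f g xs ts - I\<bar> < e)"

definition rs_integral :: "(real \<Rightarrow> real) \<Rightarrow> (real \<Rightarrow> real) \<Rightarrow> real \<Rightarrow> real \<Rightarrow> real" where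
  "rs_integral f g a b = (THE I. has_rs_integral f g a b I)"

definition centered_gaussian_rv :: "'a measure \<Rightarrow> ('a \<Rightarrow> real) \<Rightarrow> real \<Rightarrow> bool" where
  "centered_gaussian_rv M X v \<longleftrightarrow>
     (if v = 0 then (AE \<omega> in M. X \<omega> = 0)
      else v > 0 \<and> distributed M lborel X (normal_density 0 (sqrt v)))"

definition continuous_fbm :: "'a measure \<Rightarrow> real \<Rightarrow> (real \<Rightarrow> 'a \<Rightarrow> real) \<Rightarrow> bool" where
  "continuous_fbm M H Z \<longleftrightarrow>
     prob_space M \<and>
     (\<forall>t \<ge> 0. Z t \<in> borel_measurable M) \<and>
     (\<forall>(ts :: real list) (cs :: real list). length ts = length cs \<and> (\<forall>t \<in> set ts. t \<ge> 0) \<longrightarrow>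
        (\<exists>v. centered_gaussian_rv M (\<lambda>\<omega>. \<Sum>i < length ts. cs ! i * Z (ts ! i) \<omega>) v)) \<and>
     (\<forall>t s. t \<ge> 0 \<longrightarrow> s \<ge> 0 \<longrightarrow>
        integral\<^sup>L M (\<lambda>\<omega>. Z t \<omega> * Z s \<omega>)
          = (t powr (2*H) + s powr (2*H) - \<bar>t - s\<bar> powr (2*H)) / 2) \<and>
     (\<forall>\<omega> \<in> space M. continuous_on {0..} (\<lambda>t. Z t \<omega>))"

definition fbm_time_change :: "real \<Rightarrow> real \<Rightarrow> real \<Rightarrow> real" where
  "fbm_time_change \<alpha> H t = H * exp (\<alpha> * t / H) / \<alpha>"

definition Y_alpha :: "real \<Rightarrow> real \<Rightarrow> (real \<Rightarrow> 'a \<Rightarrow> real) \<Rightarrow> real \<Rightarrow> 'a \<Rightarrow> real" where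
  "Y_alpha \<alpha> H Z t \<omega> = rs_integral (\<lambda>s. exp (- \<alpha> * s)) (\<lambda>s. Z (fbm_time_change \<alpha> H s) \<omega>) 0 t"

definition C_alpha_H :: "real \<Rightarrow> real \<Rightarrow> real" where
  "C_alpha_H \<alpha> H = H * (2*H - 1) * (\<alpha> / H) powr (2 * (1 - H))"

definition r_kernel :: "real \<Rightarrow> real \<Rightarrow> real \<Rightarrow> real \<Rightarrow> real" where
  "r_kernel \<alpha> H u v = C_alpha_H \<alpha> H *
     (exp (- \<alpha> * (1 - H) * (u - v) / H) / \<bar>1 - exp (- \<alpha> * (u - v) / H)\<bar> powr (2 * (1 - H)))"

end

theory Submission
  imports Defs
begin

text \<open>
  Integrating by parts, \<open>\<integral>\<^sub>c\<^sup>d e\<^sup>-\<^sup>\<alpha>\<^sup>s dg(s) = e\<^sup>-\<^sup>\<alpha>\<^sup>d g(d) - e\<^sup>-\<^sup>\<alpha>\<^sup>c g(c) + \<alpha> \<integral>\<^sub>c\<^sup>d e\<^sup>-\<^sup>\<alpha>\<^sup>s g(s) ds\<close>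
  for every continuous \<open>g\<close>, so the pathwise integral defining \<open>Y\<close> exists and its increments
  are continuous linear functionals of the path \<open>u \<mapsto> Z (a u)\<close>. Fubini then turns the covariance
  of two increments into the same functional applied twice to the covariance
  \<open>R(a u, a v)\<close> of the time-changed process. Up to functions of \<open>u\<close> alone or \<open>v\<close> alone,
  \<open>R(a u, a v) = -|a u - a v|\<^sup>2\<^sup>H / 2\<close>, whose \<open>u\<close>-derivative is continuous because
  \<open>2H - 1 > 0\<close>; so both functionals become integrals of derivatives, and the mixed derivative
  \<open>e\<^sup>-\<^sup>\<alpha>\<^sup>u e\<^sup>-\<^sup>\<alpha>\<^sup>v \<partial>\<^sub>u\<partial>\<^sub>v (-|a u - a v|\<^sup>2\<^sup>H / 2)\<close> simplifies to \<open>r\<^sub>\<alpha>\<^sub>,\<^sub>H(u, v)\<close>.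
  Symmetry of the kernel comes from \<open>1 - e\<^sup>x = -e\<^sup>x (1 - e\<^sup>-\<^sup>x)\<close>.
\<close>

section \<open>Riemann--Stieltjes integrals by parts\<close>

lemma by_parts_error_bound:
  fixes f f' g :: "real \<Rightarrow> real"
  assumes cd: "c \<le> d"
    and f': "\<And>s. s \<in> {c..d} \<Longrightarrow> (f has_real_derivative f' s) (at s within {c..d})"
    and f'c: "continuous_on {c..d} f'" and gc: "continuous_on {c..d} g"
    and f'B: "\<And>s. s \<in> {c..d} \<Longrightarrow> \<bar>f' s\<bar> \<le> B"
    and gz: "\<And>s. s \<in> {c..d} \<Longrightarrow> \<bar>g z - g s\<bar> \<le> \<epsilon>"
  shows "\<bar>(f d - f c) * g z - integral {c..d} (\<lambda>s. f' s * g s)\<bar> \<le> B * \<epsilon> * (d - c)"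
proof -
  have "(f' has_integral f d - f c) {c..d}"
    using f' cd by (intro fundamental_theorem_of_calculus)
      (auto simp: has_real_derivative_iff_has_vector_derivative[symmetric])
  moreover have "((\<lambda>s. f' s * g s) has_integral integral {c..d} (\<lambda>s. f' s * g s)) {c..d}"
    by (intro integrable_integral integrable_continuous_interval continuous_intros f'c gc)
  ultimately have "((\<lambda>s. f' s * (g z - g s)) has_integral
      (f d - f c) * g z - integral {c..d} (\<lambda>s. f' s * g s)) (cbox c d)"
    unfolding right_diff_distrib box_real by (intro has_integral_diff has_integral_mult_left)
  then have "norm ((f d - f c) * g z - integral {c..d} (\<lambda>s. f' s * g s))
      \<le> B * \<epsilon> * Henstock_Kurzweil_Integration.content (cbox c d)"
  proof (rule has_integral_bound[rotated])
    fix s assume "s \<in> cbox c d"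
    then have s: "s \<in> {c..d}" by simp
    have "\<bar>f' s\<bar> * \<bar>g z - g s\<bar> \<le> B * \<epsilon>"
      using s f'B gz by (intro mult_mono) (auto intro: order_trans[OF abs_ge_zero f'B])
    then show "norm (f' s * (g z - g s)) \<le> B * \<epsilon>" by (simp add: abs_mult)
  next
    show "0 \<le> B * \<epsilon>" using f'B[of c] gz[of c] cd by (intro mult_nonneg_nonneg) force+
  qed
  then show ?thesis using cd by simp
qed

lemma rs_term_by_parts_error:
  fixes f f' g :: "real \<Rightarrow> real"
  assumes x\<tau>: "x \<le> \<tau>" and \<tau>y: "\<tau> \<le> y"
    and f': "\<And>s. s \<in> {x..y} \<Longrightarrow> (f has_real_derivative f' s) (at s within {x..y})"
    and f'c: "continuous_on {x..y} f'" and gc: "continuous_on {x..y} g"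
    and f'B: "\<And>s. s \<in> {x..y} \<Longrightarrow> \<bar>f' s\<bar> \<le> B"
    and g\<epsilon>: "\<And>s s'. s \<in> {x..y} \<Longrightarrow> s' \<in> {x..y} \<Longrightarrow> \<bar>g s - g s'\<bar> \<le> \<epsilon>"
  shows "\<bar>f \<tau> * (g y - g x) - (f y * g y - f x * g x - integral {x..y} (\<lambda>s. f' s * g s))\<bar>
    \<le> B * \<epsilon> * (y - x)"
proof -
  have bound: "\<bar>(f d - f c) * g z - integral {c..d} (\<lambda>s. f' s * g s)\<bar> \<le> B * \<epsilon> * (d - c)"
    if "{c..d} \<subseteq> {x..y}" "c \<le> d" "z \<in> {x..y}" for c d z
    using that by (intro by_parts_error_bound g\<epsilon> f'B continuous_on_subset[OF f'c]
        continuous_on_subset[OF gc] DERIV_subset[OF f']) auto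
  have "integral {x..\<tau>} (\<lambda>s. f' s * g s) + integral {\<tau>..y} (\<lambda>s. f' s * g s)
      = integral {x..y} (\<lambda>s. f' s * g s)"
    using x\<tau> \<tau>y by (intro Henstock_Kurzweil_Integration.integral_combine
        integrable_continuous_interval continuous_intros f'c gc)
  then have "f \<tau> * (g y - g x) - (f y * g y - f x * g x - integral {x..y} (\<lambda>s. f' s * g s))
      = - (((f \<tau> - f x) * g x - integral {x..\<tau>} (\<lambda>s. f' s * g s))
        + ((f y - f \<tau>) * g y - integral {\<tau>..y} (\<lambda>s. f' s * g s)))"
    by (simp add: algebra_simps)
  then have "\<bar>f \<tau> * (g y - g x) - (f y * g y - f x * g x - integral {x..y} (\<lambda>s. f' s * g s))\<bar>
      = \<bar>((f \<tau> - f x) * g x - integral {x..\<tau>} (\<lambda>s. f' s * g s))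
        + ((f y - f \<tau>) * g y - integral {\<tau>..y} (\<lambda>s. f' s * g s))\<bar>"
    by (simp only: abs_minus_cancel)
  also have "\<dots> \<le> B * \<epsilon> * (\<tau> - x) + B * \<epsilon> * (y - \<tau>)"
    using x\<tau> \<tau>y by (intro order_trans[OF abs_triangle_ineq] add_mono bound) auto
  finally show ?thesis by (simp add: algebra_simps)
qed

lemma rs_tagged_partition_ends:
  assumes "rs_tagged_partition a b xs ts"
  shows "xs ! 0 = a" "xs ! length ts = b" "length xs = Suc (length ts)"
proof -
  have ne: "xs \<noteq> []" and len: "length xs = Suc (length ts)"
    using assms unfolding rs_tagged_partition_def by auto
  then show "xs ! 0 = a" "xs ! length ts = b" "length xs = Suc (length ts)"
    using assms unfolding rs_tagged_partition_def by (auto simp: hd_conv_nth last_conv_nth)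
qed

lemma rs_tagged_partition_nth:
  assumes part: "rs_tagged_partition a b xs ts" and i: "i < length ts"
  shows "a \<le> xs ! i" "xs ! i \<le> ts ! i" "ts ! i \<le> xs ! Suc i" "xs ! Suc i \<le> b"
proof -
  have "sorted xs" using part unfolding rs_tagged_partition_def by simp
  then have "xs ! 0 \<le> xs ! i" "xs ! Suc i \<le> xs ! length ts"
    using i rs_tagged_partition_ends(3)[OF part] by (auto intro: sorted_nth_mono)
  then show "a \<le> xs ! i" "xs ! Suc i \<le> b" using rs_tagged_partition_ends[OF part] by simp_all
  show "xs ! i \<le> ts ! i" "ts ! i \<le> xs ! Suc i"
    using part i unfolding rs_tagged_partition_def by auto
qed

lemma rs_sum_telescope_bound:
  assumes part: "rs_tagged_partition a b xs ts"
    and term_bound: "\<And>i. i < length ts \<Longrightarrow>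
      \<bar>f (ts ! i) * (g (xs ! Suc i) - g (xs ! i)) - (G (xs ! Suc i) - G (xs ! i))\<bar> \<le> C * (xs ! Suc i - xs ! i)"
  shows "\<bar>rs_sum f g xs ts - (G b - G a)\<bar> \<le> C * (b - a)"
proof -
  define n where "n = length ts"
  note ends = rs_tagged_partition_ends[OF part, folded n_def]
  have "rs_sum f g xs ts - (G b - G a)
      = (\<Sum>i<n. f (ts ! i) * (g (xs ! Suc i) - g (xs ! i)) - (G (xs ! Suc i) - G (xs ! i)))"
    using sum_lessThan_telescope[of "\<lambda>i. G (xs ! i)" n] ends
    unfolding rs_sum_def n_def[symmetric] by (simp add: sum_subtractf)
  also have "\<bar>\<dots>\<bar> \<le> (\<Sum>i<n. C * (xs ! Suc i - xs ! i))"
    by (rule order_trans[OF sum_abs sum_mono]) (simp add: term_bound n_def)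
  also have "\<dots> = C * (b - a)"
    using sum_lessThan_telescope[of "\<lambda>i. xs ! i" n] ends by (simp add: sum_distrib_left[symmetric])
  finally show ?thesis .
qed

lemma rs_sum_by_parts_error:
  fixes f f' g :: "real \<Rightarrow> real"
  assumes part: "rs_tagged_partition a b xs ts" and mesh: "rs_mesh_less xs d"
    and f': "\<And>s. s \<in> {a..b} \<Longrightarrow> (f has_real_derivative f' s) (at s within {a..b})"
    and f'c: "continuous_on {a..b} f'" and gc: "continuous_on {a..b} g"
    and f'B: "\<And>s. s \<in> {a..b} \<Longrightarrow> \<bar>f' s\<bar> \<le> B"
    and g\<epsilon>: "\<And>s s'. s \<in> {a..b} \<Longrightarrow> s' \<in> {a..b} \<Longrightarrow> \<bar>s - s'\<bar> < d \<Longrightarrow> \<bar>g s - g s'\<bar> \<le> \<epsilon>"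
  shows "\<bar>rs_sum f g xs ts - (f b * g b - f a * g a - integral {a..b} (\<lambda>s. f' s * g s))\<bar>
    \<le> B * \<epsilon> * (b - a)"
proof -
  define G where "G x = f x * g x - integral {a..x} (\<lambda>s. f' s * g s)" for x
  have "\<bar>rs_sum f g xs ts - (G b - G a)\<bar> \<le> B * \<epsilon> * (b - a)"
  proof (rule rs_sum_telescope_bound[OF part])
    fix i assume i: "i < length ts"
    define x y where "x = xs ! i" and "y = xs ! Suc i"
    note nth = rs_tagged_partition_nth[OF part i, folded x_def y_def]
    have "integral {a..x} (\<lambda>s. f' s * g s) + integral {x..y} (\<lambda>s. f' s * g s)
        = integral {a..y} (\<lambda>s. f' s * g s)"
      using nth by (intro Henstock_Kurzweil_Integration.integral_combine integrable_continuous_interval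
          continuous_on_subset[OF continuous_on_mult[OF f'c gc]]) auto
    then have "G y - G x = f y * g y - f x * g x - integral {x..y} (\<lambda>s. f' s * g s)"
      unfolding G_def by (simp add: algebra_simps)
    moreover have "y - x < d"
      using mesh i rs_tagged_partition_ends(3)[OF part] unfolding rs_mesh_less_def x_def y_def by auto
    then have "\<bar>f (ts ! i) * (g y - g x) - (f y * g y - f x * g x - integral {x..y} (\<lambda>s. f' s * g s))\<bar>
        \<le> B * \<epsilon> * (y - x)"
      using nth by (intro rs_term_by_parts_error[where f'=f'] DERIV_subset[OF f'] f'B g\<epsilon>
          continuous_on_subset[OF f'c] continuous_on_subset[OF gc]) auto
    ultimately show "\<bar>f (ts ! i) * (g (xs ! Suc i) - g (xs ! i)) - (G (xs ! Suc i) - G (xs ! i))\<bar>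
        \<le> B * \<epsilon> * (xs ! Suc i - xs ! i)"
      unfolding x_def y_def by simp
  qed
  then show ?thesis by (simp add: G_def)
qed

lemma has_rs_integral_by_parts:
  fixes f f' g :: "real \<Rightarrow> real"
  assumes ab: "a \<le> b"
    and f': "\<And>s. s \<in> {a..b} \<Longrightarrow> (f has_real_derivative f' s) (at s within {a..b})"
    and f'c: "continuous_on {a..b} f'" and gc: "continuous_on {a..b} g"
  shows "has_rs_integral f g a b (f b * g b - f a * g a - integral {a..b} (\<lambda>s. f' s * g s))"
  unfolding has_rs_integral_def
proof (intro allI impI)
  fix e :: real assume e: "e > 0"
  obtain B0 where "\<forall>y \<in> f' ` {a..b}. norm y \<le> B0"
    using compact_imp_bounded[OF compact_continuous_image[OF f'c compact_Icc]]
    unfolding bounded_iff by blast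
  then have f'B: "\<And>s. s \<in> {a..b} \<Longrightarrow> \<bar>f' s\<bar> \<le> max B0 0"
    by (auto intro: max.coboundedI1)
  define B where "B = max B0 0"
  define \<epsilon> where "\<epsilon> = e / (2 * (B * (b - a) + 1))"
  have den: "B * (b - a) + 1 > 0" using ab by (simp add: B_def add_nonneg_pos)
  then have "\<epsilon> > 0" unfolding \<epsilon>_def using e by simp
  then obtain d where d: "d > 0"
    and dg: "\<And>s s'. s \<in> {a..b} \<Longrightarrow> s' \<in> {a..b} \<Longrightarrow> dist s' s < d \<Longrightarrow> dist (g s') (g s) < \<epsilon>"
    using compact_uniformly_continuous[OF gc compact_Icc] unfolding uniformly_continuous_on_def by metis
  have g\<epsilon>: "\<bar>g s - g s'\<bar> \<le> \<epsilon>" if "s \<in> {a..b}" "s' \<in> {a..b}" "\<bar>s - s'\<bar> < d" for s s'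
    using dg[OF that(2,1)] that(3) by (simp add: dist_real_def abs_minus_commute)
  show "\<exists>d>0. \<forall>xs ts. rs_tagged_partition a b xs ts \<and> rs_mesh_less xs d \<longrightarrow>
      \<bar>rs_sum f g xs ts - (f b * g b - f a * g a - integral {a..b} (\<lambda>s. f' s * g s))\<bar> < e"
  proof (intro exI[of _ d] conjI allI impI d, elim conjE)
    fix xs ts assume "rs_tagged_partition a b xs ts" "rs_mesh_less xs d"
    from rs_sum_by_parts_error[OF this f' f'c gc f'B g\<epsilon>, folded B_def]
    have "\<bar>rs_sum f g xs ts - (f b * g b - f a * g a - integral {a..b} (\<lambda>s. f' s * g s))\<bar>
        \<le> e * (B * (b - a)) / (2 * (B * (b - a) + 1))"
      unfolding \<epsilon>_def by (simp add: mult_ac)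
    also have "\<dots> < e"
      using e den by (simp add: divide_less_eq mult.commute)
    finally show "\<bar>rs_sum f g xs ts - (f b * g b - f a * g a - integral {a..b} (\<lambda>s. f' s * g s))\<bar> < e" .
  qed
qed

lemma rs_tagged_partition_exists:
  assumes ab: "a \<le> b" and d: "d > 0"
  shows "\<exists>xs ts. rs_tagged_partition a b xs ts \<and> rs_mesh_less xs d"
proof -
  define n :: nat where "n = nat \<lceil>(b - a) / d\<rceil> + 1"
  have n1: "n \<ge> 1" unfolding n_def by simp
  have "(b - a) / d < real n" unfolding n_def by linarith
  then have bn: "(b - a) / real n < d" using d n1 by (simp add: field_simps)
  define P where "P k = a + (b - a) * real k / real n" for k :: nat
  have Pmono: "P i \<le> P j" if "i \<le> j" for i j
    unfolding P_def using ab that by (intro add_left_mono divide_right_mono mult_left_mono) auto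
  define xs where "xs = map P [0..<Suc n]"
  define ts where "ts = map P [0..<n]"
  have "rs_tagged_partition a b xs ts"
    unfolding rs_tagged_partition_def
  proof (intro conjI)
    show "2 \<le> length xs" using n1 unfolding xs_def by simp
    show "sorted xs" unfolding xs_def sorted_iff_nth_mono by (auto simp del: upt_Suc intro: Pmono)
    show "hd xs = a" unfolding xs_def P_def by (simp add: hd_map)
    show "last xs = b" unfolding xs_def P_def using n1 by (simp add: last_map)
    show "length ts = length xs - 1" unfolding xs_def ts_def by simp
    show "\<forall>i<length ts. xs ! i \<le> ts ! i \<and> ts ! i \<le> xs ! Suc i"
      unfolding xs_def ts_def by (auto simp del: upt_Suc intro: Pmono)
  qed
  moreover have "rs_mesh_less xs d"
    unfolding rs_mesh_less_def
  proof (intro allI impI)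
    fix i assume "Suc i < length xs"
    then have i: "Suc i < Suc n" unfolding xs_def by simp
    have "xs ! Suc i - xs ! i = P (Suc i) - P i" unfolding xs_def using i by (simp del: upt_Suc)
    also have "\<dots> = (b - a) / real n" unfolding P_def using n1 by (simp add: field_simps)
    finally show "xs ! Suc i - xs ! i < d" using bn by simp
  qed
  ultimately show ?thesis by blast
qed

lemma has_rs_integral_unique:
  assumes ab: "a \<le> b" and I: "has_rs_integral f g a b I" and J: "has_rs_integral f g a b J"
  shows "I = J"
proof (rule ccontr)
  assume ne: "I \<noteq> J"
  define e where "e = \<bar>I - J\<bar> / 2"
  have e: "e > 0" using ne unfolding e_def by simp
  obtain d1 where d1: "d1 > 0" "\<And>xs ts. rs_tagged_partition a b xs ts \<and> rs_mesh_less xs d1 \<Longrightarrow> \<bar>rs_sum f g xs ts - I\<bar> < e"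
    using I e unfolding has_rs_integral_def by blast
  obtain d2 where d2: "d2 > 0" "\<And>xs ts. rs_tagged_partition a b xs ts \<and> rs_mesh_less xs d2 \<Longrightarrow> \<bar>rs_sum f g xs ts - J\<bar> < e"
    using J e unfolding has_rs_integral_def by blast
  obtain xs ts where P: "rs_tagged_partition a b xs ts" "rs_mesh_less xs (min d1 d2)"
    using rs_tagged_partition_exists[OF ab, of "min d1 d2"] d1 d2 by auto
  have "rs_mesh_less xs d1" "rs_mesh_less xs d2" using P(2) unfolding rs_mesh_less_def by auto
  then have "\<bar>rs_sum f g xs ts - I\<bar> < e" "\<bar>rs_sum f g xs ts - J\<bar> < e" using d1 d2 P by auto
  then show False unfolding e_def by (auto simp: abs_if split: if_splits)
qed

lemma rs_integral_eqI:
  assumes "a \<le> b" "has_rs_integral f g a b I"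
  shows "rs_integral f g a b = I"
  unfolding rs_integral_def using assms has_rs_integral_unique by blast

section \<open>Stieltjes integrals against \<open>e\<^sup>-\<^sup>\<alpha>\<^sup>u\<close>\<close>

text \<open>\<open>\<integral>\<^sub>c\<^sup>d e\<^sup>-\<^sup>\<alpha>\<^sup>u dh(u)\<close> in integrated-by-parts form.\<close>

definition exp_stieltjes :: "real \<Rightarrow> real \<Rightarrow> real \<Rightarrow> (real \<Rightarrow> real) \<Rightarrow> real" where
  "exp_stieltjes \<alpha> c d h =
     exp (- \<alpha> * d) * h d - exp (- \<alpha> * c) * h c + \<alpha> * integral {c..d} (\<lambda>u. exp (- \<alpha> * u) * h u)"

lemma rs_integral_exp_eq_exp_stieltjes:
  assumes ab: "a \<le> b" and gc: "continuous_on {a..b} g"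
  shows "rs_integral (\<lambda>s. exp (- \<alpha> * s)) g a b = exp_stieltjes \<alpha> a b g"
proof -
  have "has_rs_integral (\<lambda>s. exp (- \<alpha> * s)) g a b (exp (- \<alpha> * b) * g b - exp (- \<alpha> * a) * g a
      - integral {a..b} (\<lambda>s. - \<alpha> * exp (- \<alpha> * s) * g s))"
    by (rule has_rs_integral_by_parts[OF ab _ _ gc]) (auto intro!: derivative_eq_intros continuous_intros)
  moreover have "integral {a..b} (\<lambda>s. - \<alpha> * exp (- \<alpha> * s) * g s)
      = - \<alpha> * integral {a..b} (\<lambda>s. exp (- \<alpha> * s) * g s)"
    by (simp add: mult.assoc)
  ultimately show ?thesis unfolding exp_stieltjes_def by (simp add: rs_integral_eqI[OF ab])
qed

lemma exp_stieltjes_has_integral: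
  assumes cd: "c \<le> d" and S: "finite S" and hc: "continuous_on {c..d} h"
    and h': "\<And>x. x \<in> {c<..<d} - S \<Longrightarrow> (h has_real_derivative h' x) (at x)"
  shows "((\<lambda>u. exp (- \<alpha> * u) * h' u) has_integral exp_stieltjes \<alpha> c d h) {c..d}"
proof -
  have "((\<lambda>u. - \<alpha> * exp (- \<alpha> * u) * h u + exp (- \<alpha> * u) * h' u) has_integral
      exp (- \<alpha> * d) * h d - exp (- \<alpha> * c) * h c) {c..d}"
  proof (rule fundamental_theorem_of_calculus_interior_strong[OF S cd])
    fix x assume "x \<in> {c<..<d} - S"
    then show "((\<lambda>u. exp (- \<alpha> * u) * h u) has_vector_derivative
        - \<alpha> * exp (- \<alpha> * x) * h x + exp (- \<alpha> * x) * h' x) (at x)"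
      using h' unfolding has_real_derivative_iff_has_vector_derivative[symmetric]
      by (auto intro!: derivative_eq_intros)
  qed (intro continuous_intros hc)
  moreover have "((\<lambda>u. \<alpha> * (exp (- \<alpha> * u) * h u)) has_integral
      \<alpha> * integral {c..d} (\<lambda>u. exp (- \<alpha> * u) * h u)) {c..d}"
    by (intro has_integral_mult_right integrable_integral integrable_continuous_interval
        continuous_intros hc)
  ultimately have "((\<lambda>u. (- \<alpha> * exp (- \<alpha> * u) * h u + exp (- \<alpha> * u) * h' u)
      + \<alpha> * (exp (- \<alpha> * u) * h u)) has_integral exp_stieltjes \<alpha> c d h) {c..d}"
    unfolding exp_stieltjes_def by (rule has_integral_add)
  then show ?thesis by (simp add: algebra_simps)
qed

lemma exp_stieltjes_const:
  assumes "c \<le> d"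
  shows "exp_stieltjes \<alpha> c d (\<lambda>_. k) = 0"
proof -
  have "((\<lambda>u. exp (- \<alpha> * u) * 0) has_integral exp_stieltjes \<alpha> c d (\<lambda>_. k)) {c..d}"
    by (rule exp_stieltjes_has_integral[OF assms, of "{}"]) auto
  then show ?thesis by (simp add: has_integral_0_eq)
qed

lemma exp_stieltjes_add:
  assumes "continuous_on {c..d} f" "continuous_on {c..d} g"
  shows "exp_stieltjes \<alpha> c d (\<lambda>u. f u + g u) = exp_stieltjes \<alpha> c d f + exp_stieltjes \<alpha> c d g"
proof -
  have "integral {c..d} (\<lambda>u. exp (- \<alpha> * u) * (f u + g u))
      = integral {c..d} (\<lambda>u. exp (- \<alpha> * u) * f u) + integral {c..d} (\<lambda>u. exp (- \<alpha> * u) * g u)"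
    unfolding distrib_left by (intro integral_add integrable_continuous_interval continuous_intros assms)
  then show ?thesis unfolding exp_stieltjes_def by (simp add: algebra_simps)
qed

lemma exp_stieltjes_cmult: "exp_stieltjes \<alpha> c d (\<lambda>u. k * f u) = k * exp_stieltjes \<alpha> c d f"
  unfolding exp_stieltjes_def by (simp add: algebra_simps flip: integral_mult_right)

lemma exp_stieltjes_combine:
  assumes "c \<le> d" "d \<le> e" "continuous_on {c..e} h"
  shows "exp_stieltjes \<alpha> c e h = exp_stieltjes \<alpha> c d h + exp_stieltjes \<alpha> d e h"
proof -
  have "integral {c..d} (\<lambda>u. exp (- \<alpha> * u) * h u) + integral {d..e} (\<lambda>u. exp (- \<alpha> * u) * h u)
      = integral {c..e} (\<lambda>u. exp (- \<alpha> * u) * h u)"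
    using assms by (intro Henstock_Kurzweil_Integration.integral_combine integrable_continuous_interval
        continuous_intros)
  then show ?thesis unfolding exp_stieltjes_def by (simp add: algebra_simps flip: distrib_left)
qed

lemma continuous_on_uncurry_fix2:
  assumes "continuous_on UNIV (\<lambda>(x, y). F x y)"
  shows "continuous_on S (\<lambda>x. F x y)"
  using continuous_on_compose2[OF assms continuous_on_Pair[OF continuous_on_id continuous_on_const]]
  by simp

lemma continuous_on_uncurry_fix1:
  assumes "continuous_on UNIV (\<lambda>(x, y). F x y)"
  shows "continuous_on S (\<lambda>y. F x y)"
  using continuous_on_compose2[OF assms continuous_on_Pair[OF continuous_on_const continuous_on_id]]
  by simp

lemma continuous_on_integral_uncurry:
  fixes G :: "'a::topological_space \<Rightarrow> real \<Rightarrow> real"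
  assumes "continuous_on UNIV (\<lambda>(x, v). G x v)"
  shows "continuous_on S (\<lambda>x. integral {c..d} (G x))"
  using integral_continuous_on_param[of S c d G] continuous_on_subset[OF assms] by simp

lemma exp_stieltjes_continuous_param:
  assumes Fc: "continuous_on UNIV (\<lambda>(x, v). F x v)"
  shows "continuous_on S (\<lambda>x. exp_stieltjes \<alpha> c d (F x))"
  unfolding exp_stieltjes_def
  by (intro continuous_intros continuous_on_uncurry_fix2[OF Fc] continuous_on_integral_uncurry)
    (auto simp: case_prod_unfold intro!: continuous_intros
      continuous_on_compose2[OF Fc, unfolded case_prod_unfold])

lemma exp_stieltjes_integral_swap:
  fixes F :: "real \<Rightarrow> real \<Rightarrow> real"
  assumes Fc: "continuous_on UNIV (\<lambda>(u, v). F u v)"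
  shows "exp_stieltjes \<alpha> c d (\<lambda>v. integral {a..b} (\<lambda>u. F u v))
       = integral {a..b} (\<lambda>u. exp_stieltjes \<alpha> c d (F u))"
proof -
  have "integral {c..d} (\<lambda>v. exp (- \<alpha> * v) * integral {a..b} (\<lambda>u. F u v))
      = integral {c..d} (\<lambda>v. integral {a..b} (\<lambda>u. exp (- \<alpha> * v) * F u v))"
    by simp
  also have "\<dots> = integral {a..b} (\<lambda>u. integral {c..d} (\<lambda>v. exp (- \<alpha> * v) * F u v))"
  proof -
    have "continuous_on UNIV (\<lambda>x. F (snd x) (fst x))"
      using continuous_on_compose2[OF Fc continuous_on_swap] by (simp add: case_prod_unfold)
    then have "continuous_on (cbox (c, a) (d, b)) (\<lambda>(v, u). exp (- \<alpha> * v) * F u v)"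
      by (auto simp: case_prod_unfold intro!: continuous_intros intro: continuous_on_subset)
    from integral_swap_continuous[OF this] show ?thesis by simp
  qed
  finally have swap: "integral {c..d} (\<lambda>v. exp (- \<alpha> * v) * integral {a..b} (\<lambda>u. F u v))
      = integral {a..b} (\<lambda>u. integral {c..d} (\<lambda>v. exp (- \<alpha> * v) * F u v))" .
  have "integral {a..b} (\<lambda>u. exp_stieltjes \<alpha> c d (F u))
      = exp (- \<alpha> * d) * integral {a..b} (\<lambda>u. F u d) - exp (- \<alpha> * c) * integral {a..b} (\<lambda>u. F u c)
        + \<alpha> * integral {a..b} (\<lambda>u. integral {c..d} (\<lambda>v. exp (- \<alpha> * v) * F u v))"
  proof -
    have i1: "(\<lambda>u. exp (- \<alpha> * d) * F u d) integrable_on {a..b}"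
      and i2: "(\<lambda>u. exp (- \<alpha> * c) * F u c) integrable_on {a..b}"
      by (intro integrable_continuous_interval continuous_intros continuous_on_uncurry_fix2[OF Fc])+
    have i3: "(\<lambda>u. \<alpha> * integral {c..d} (\<lambda>v. exp (- \<alpha> * v) * F u v)) integrable_on {a..b}"
      by (intro integrable_continuous_interval continuous_intros continuous_on_integral_uncurry)
        (auto simp: case_prod_unfold intro!: continuous_intros
          continuous_on_compose2[OF Fc, unfolded case_prod_unfold])
    show ?thesis
      unfolding exp_stieltjes_def integral_add[OF integrable_diff[OF i1 i2] i3] integral_diff[OF i1 i2]
      by simp
  qed
  then show ?thesis unfolding exp_stieltjes_def swap by simp
qed

section \<open>The covariance kernel\<close>

text \<open>\<open>signed_powr q x = sgn x * \<bar>x\<bar> powr q\<close>, written so that continuity is evident.\<close>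

definition signed_powr :: "real \<Rightarrow> real \<Rightarrow> real" where
  "signed_powr q x = max x 0 powr q - max (- x) 0 powr q"

lemma signed_powr_pos: "x > 0 \<Longrightarrow> signed_powr q x = x powr q"
  unfolding signed_powr_def by simp

lemma signed_powr_neg: "x < 0 \<Longrightarrow> signed_powr q x = - ((- x) powr q)"
  unfolding signed_powr_def by simp

lemma continuous_on_signed_powr: assumes "q > 0" shows "continuous_on UNIV (signed_powr q)"
  unfolding signed_powr_def using assms
  by (intro continuous_intros continuous_on_powr') auto

lemma has_real_derivative_abs_powr:
  assumes x: "x \<noteq> 0"
  shows "((\<lambda>x::real. \<bar>x\<bar> powr p) has_real_derivative (p * signed_powr (p - 1) x)) (at x)"
proof (cases "x > 0")
  case True
  have "((\<lambda>x. x powr p) has_real_derivative (p * x powr (p - 1))) (at x)"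
    by (rule has_real_derivative_powr[OF True])
  then have "((\<lambda>x. x powr p) has_real_derivative (p * signed_powr (p - 1) x)) (at x)"
    using True by (simp add: signed_powr_pos)
  then show ?thesis
    by (rule has_field_derivative_transform_within_open[where S="{0<..}"])
       (use True in \<open>auto simp: signed_powr_pos\<close>)
next
  case False
  then have xn: "x < 0" using x by simp
  have "((\<lambda>x. (- x) powr p) has_real_derivative (p * (- x) powr (p - 1) * (- 1))) (at x)"
    using has_real_derivative_powr[of "- x" p] xn
    by (intro DERIV_chain2[where f="\<lambda>x. x powr p"] derivative_eq_intros) auto
  then have "((\<lambda>x. (- x) powr p) has_real_derivative (p * signed_powr (p - 1) x)) (at x)"
    using xn by (simp add: signed_powr_neg)
  then show ?thesis
    by (rule has_field_derivative_transform_within_open[where S="{..<0}"])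
       (use xn in \<open>auto simp: signed_powr_neg\<close>)
qed

lemma has_real_derivative_signed_powr:
  assumes x: "x \<noteq> 0"
  shows "(signed_powr q has_real_derivative (q * \<bar>x\<bar> powr (q - 1))) (at x)"
proof (cases "x > 0")
  case True
  have "((\<lambda>x. x powr q) has_real_derivative (q * x powr (q - 1))) (at x)"
    by (rule has_real_derivative_powr[OF True])
  then have "((\<lambda>x. x powr q) has_real_derivative (q * \<bar>x\<bar> powr (q - 1))) (at x)"
    using True by simp
  then show ?thesis
    by (rule has_field_derivative_transform_within_open[where S="{0<..}"])
       (use True in \<open>auto simp: signed_powr_pos\<close>)
next
  case False
  then have xn: "x < 0" using x by simp
  have "((\<lambda>x. - ((- x) powr q)) has_real_derivative - (q * (- x) powr (q - 1) * (- 1))) (at x)"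
    using has_real_derivative_powr[of "- x" q] xn
    by (intro derivative_intros DERIV_chain2[where f="\<lambda>x. x powr q"] derivative_eq_intros) auto
  then have "((\<lambda>x. - ((- x) powr q)) has_real_derivative (q * \<bar>x\<bar> powr (q - 1))) (at x)"
    using xn by simp
  then show ?thesis
    by (rule has_field_derivative_transform_within_open[where S="{..<0}"])
       (use xn in \<open>auto simp: signed_powr_neg\<close>)
qed

lemma interval_integral_eq_integral_nonneg:
  fixes f :: "real \<Rightarrow> real"
  assumes cd: "c \<le> d" and fm: "f \<in> borel_measurable borel" and fi: "f integrable_on {c..d}"
    and nn: "\<And>x. x \<in> {c..d} \<Longrightarrow> 0 \<le> f x"
  shows "(LBINT x=c..d. f x) = integral {c..d} f"
proof -
  have "set_integrable lebesgue {c..d} f"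
    by (rule nonnegative_absolutely_integrable_1[OF fi nn])
  then have "set_integrable lborel {c..d} f"
    unfolding set_integrable_def using fm by (subst (asm) integrable_completion) auto
  then show ?thesis by (rule interval_integral_eq_integral[OF cd])
qed

lemma r_kernel_sym: "r_kernel \<alpha> H u v = r_kernel \<alpha> H v u"
proof -
  define x where "x = u - v"
  define p where "p = 2 * (1 - H)"
  define \<rho> where "\<rho> = 1 - exp (- \<alpha> * x / H)"
  define E where "E = exp (p * (\<alpha> * x / H))"
  have "1 - exp (\<alpha> * x / H) = - exp (\<alpha> * x / H) * \<rho>"
    unfolding \<rho>_def by (simp add: algebra_simps flip: exp_add)
  then have den: "\<bar>1 - exp (\<alpha> * x / H)\<bar> powr p = E * \<bar>\<rho>\<bar> powr p"
    unfolding E_def by (simp add: abs_mult powr_mult exp_powr_real mult.commute)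
  have num: "exp (\<alpha> * (1 - H) * x / H) = E * exp (- \<alpha> * (1 - H) * x / H)"
    unfolding E_def p_def by (cases "H = 0") (simp_all add: field_simps flip: exp_add)
  have "r_kernel \<alpha> H v u = C_alpha_H \<alpha> H * (exp (\<alpha> * (1 - H) * x / H) / \<bar>1 - exp (\<alpha> * x / H)\<bar> powr p)"
    unfolding r_kernel_def x_def p_def by (simp add: algebra_simps)
  also have "\<dots> = C_alpha_H \<alpha> H * (exp (- \<alpha> * (1 - H) * x / H) / \<bar>\<rho>\<bar> powr p)"
    unfolding num den using E_def by simp
  also have "\<dots> = r_kernel \<alpha> H u v"
    unfolding r_kernel_def x_def p_def \<rho>_def ..
  finally show ?thesis ..
qed

definition fbm_covariance :: "real \<Rightarrow> real \<Rightarrow> real \<Rightarrow> real" where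
  "fbm_covariance H x y = (x powr (2 * H) + y powr (2 * H) - \<bar>x - y\<bar> powr (2 * H)) / 2"

lemma fbm_covariance_commute: "fbm_covariance H x y = fbm_covariance H y x"
  unfolding fbm_covariance_def by (simp add: abs_minus_commute algebra_simps)

locale exp_time_change =
  fixes \<alpha> H :: real
  assumes alpha_pos: "\<alpha> > 0" and H_gt: "1/2 < H" and H_lt: "H < 1"
begin

abbreviation a where "a \<equiv> fbm_time_change \<alpha> H"

text \<open>\<open>incr_var u v\<close> is the variance of \<open>Z (a u) - Z (a v)\<close>; the other two are its derivatives
  \<open>\<partial>\<^sub>u\<close> and \<open>\<partial>\<^sub>v \<partial>\<^sub>u\<close> off the diagonal.\<close>

definition incr_var where "incr_var u v = \<bar>a u - a v\<bar> powr (2 * H)"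
definition incr_var_du where
  "incr_var_du u v = 2 * H * signed_powr (2 * H - 1) (a u - a v) * exp (\<alpha> * u / H)"
definition incr_var_dudv where
  "incr_var_dudv u v = - (2 * H * (2 * H - 1)) * \<bar>a u - a v\<bar> powr (2 * H - 2)
     * exp (\<alpha> * u / H) * exp (\<alpha> * v / H)"

lemma H_pos: "H > 0" using H_gt by simp

lemma a_pos: "a u > 0"
  unfolding fbm_time_change_def using alpha_pos H_pos by simp

lemma a_deriv: "(a has_real_derivative exp (\<alpha> * u / H)) (at u)"
  unfolding fbm_time_change_def using alpha_pos H_pos
  by (auto intro!: derivative_eq_intros simp: field_simps)

lemma continuous_on_a: "continuous_on S a"
  unfolding fbm_time_change_def using alpha_pos H_pos by (auto intro!: continuous_intros)

lemma a_eq_iff: "a u = a v \<longleftrightarrow> u = v"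
  unfolding fbm_time_change_def using alpha_pos H_pos by auto

lemma a_mono: "u \<le> v \<Longrightarrow> a u \<le> a v"
  unfolding fbm_time_change_def using alpha_pos H_pos
  by (intro divide_right_mono mult_left_mono) (auto simp: divide_right_mono)

lemma a_diff: "a u - a v = (H / \<alpha>) * exp (\<alpha> * u / H) * (1 - exp (- \<alpha> * (u - v) / H))"
proof -
  have "exp (\<alpha> * u / H) * exp (- \<alpha> * (u - v) / H) = exp (\<alpha> * v / H)"
    using H_pos by (simp add: field_simps flip: exp_add)
  then show ?thesis unfolding fbm_time_change_def by (simp add: algebra_simps)
qed

lemma incr_var_deriv:
  assumes "u \<noteq> v"
  shows "((\<lambda>u. incr_var u v) has_real_derivative incr_var_du u v) (at u)"
proof -
  have "a u - a v \<noteq> 0" using assms a_eq_iff by simp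
  from DERIV_chain2[OF has_real_derivative_abs_powr[OF this] DERIV_diff[OF a_deriv DERIV_const]]
  show ?thesis unfolding incr_var_def incr_var_du_def by simp
qed

lemma incr_var_du_deriv:
  assumes "u \<noteq> v"
  shows "((\<lambda>v. incr_var_du u v) has_real_derivative incr_var_dudv u v) (at v)"
proof -
  have ne: "a u - a v \<noteq> 0" using assms a_eq_iff by simp
  have "((\<lambda>v. signed_powr (2 * H - 1) (a u - a v)) has_real_derivative
      ((2 * H - 1) * \<bar>a u - a v\<bar> powr (2 * H - 1 - 1)) * (0 - exp (\<alpha> * v / H))) (at v)"
    by (rule DERIV_chain2[where f="signed_powr (2 * H - 1)" and g="\<lambda>v. a u - a v",
          OF has_real_derivative_signed_powr[OF ne]])
      (intro derivative_intros a_deriv)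
  from DERIV_cmult[OF this, of "2 * H * exp (\<alpha> * u / H)"]
  show ?thesis unfolding incr_var_du_def incr_var_dudv_def by (simp add: algebra_simps)
qed

lemma continuous_on_incr_var: "continuous_on S (\<lambda>u. incr_var u v)"
  unfolding incr_var_def using H_pos
  by (intro continuous_on_powr' continuous_intros continuous_on_a) auto

lemma continuous_on_incr_var_du: "continuous_on UNIV (\<lambda>(u, v). incr_var_du u v)"
proof -
  have "continuous_on UNIV (\<lambda>x. signed_powr (2 * H - 1) (a (fst x) - a (snd x)))"
    by (rule continuous_on_compose2[OF continuous_on_signed_powr])
      (use H_gt in \<open>auto intro!: continuous_intros continuous_on_compose2[OF continuous_on_a]\<close>)
  then show ?thesis unfolding incr_var_du_def case_prod_unfold using H_pos
    by (auto intro!: continuous_intros)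
qed

lemma exp_exp_incr_var_dudv:
  "exp (- \<alpha> * u) * exp (- \<alpha> * v) * incr_var_dudv u v = - 2 * r_kernel \<alpha> H u v"
proof (cases "u = v")
  case True
  \<comment> \<open>both sides are junk values \<open>0\<close>, since \<open>0 powr p = 0\<close>\<close>
  then show ?thesis unfolding incr_var_dudv_def r_kernel_def by simp
next
  case False
  define \<rho> where "\<rho> = 1 - exp (- \<alpha> * (u - v) / H)"
  have rne: "\<rho> \<noteq> 0" unfolding \<rho>_def using False alpha_pos H_pos by simp
  have ad: "\<bar>a u - a v\<bar> = (H / \<alpha>) * exp (\<alpha> * u / H) * \<bar>\<rho>\<bar>"
    unfolding a_diff \<rho>_def using alpha_pos H_pos by (simp add: abs_mult)
  have lnad: "ln \<bar>a u - a v\<bar> = ln H - ln \<alpha> + \<alpha> * u / H + ln \<bar>\<rho>\<bar>"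
    unfolding ad using alpha_pos H_pos rne by (simp add: ln_mult ln_div)
  have ne: "\<bar>a u - a v\<bar> \<noteq> 0" using False a_eq_iff by simp
  have "exp (- \<alpha> * u) * exp (- \<alpha> * v) * incr_var_dudv u v
      = - (2 * H * (2 * H - 1)) * exp (- \<alpha> * u + - \<alpha> * v + (2 * H - 2) * ln \<bar>a u - a v\<bar> + \<alpha> * u / H + \<alpha> * v / H)"
  proof -
    have "\<bar>a u - a v\<bar> powr (2 * H - 2) = exp ((2 * H - 2) * ln \<bar>a u - a v\<bar>)" using ne by (simp add: powr_def)
    then show ?thesis unfolding incr_var_dudv_def exp_add by (simp only: mult_ac)
  qed
  also have "- \<alpha> * u + - \<alpha> * v + (2 * H - 2) * ln \<bar>a u - a v\<bar> + \<alpha> * u / H + \<alpha> * v / H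
      = 2 * (1 - H) * (ln \<alpha> - ln H) + (- \<alpha> * (1 - H) * (u - v) / H) - 2 * (1 - H) * ln \<bar>\<rho>\<bar>"
    unfolding lnad using H_pos by (simp add: field_simps)
  also have "- (2 * H * (2 * H - 1)) * exp (2 * (1 - H) * (ln \<alpha> - ln H) + (- \<alpha> * (1 - H) * (u - v) / H) - 2 * (1 - H) * ln \<bar>\<rho>\<bar>)
      = - 2 * r_kernel \<alpha> H u v"
  proof -
    have p1: "(\<alpha> / H) powr (2 * (1 - H)) = exp (2 * (1 - H) * (ln \<alpha> - ln H))"
      using alpha_pos H_pos by (simp add: powr_def ln_div)
    have p2: "\<bar>\<rho>\<bar> powr (2 * (1 - H)) = exp (2 * (1 - H) * ln \<bar>\<rho>\<bar>)"
      using rne by (simp add: powr_def)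
    have rearrange: "\<And>X B L. - (2 * H * (2 * H - 1)) * (exp X * exp B / exp L) = - 2 * (H * (2 * H - 1) * exp X * (exp B / exp L))"
      by (simp add: algebra_simps)
    show ?thesis
      unfolding r_kernel_def C_alpha_H_def \<rho>_def[symmetric] p1 p2 exp_diff exp_add by (rule rearrange)
  qed
  finally show ?thesis .
qed

lemma exp_stieltjes_fbm_covariance:
  assumes t: "t1 \<le> t2"
  shows "exp_stieltjes \<alpha> t1 t2 (\<lambda>u. fbm_covariance H (a u) (a v))
    = exp_stieltjes \<alpha> t1 t2 (\<lambda>u. a u powr (2 * H) / 2)
      + (- 1 / 2) * integral {t1..t2} (\<lambda>u. exp (- \<alpha> * u) * incr_var_du u v)"
proof -
  have cov: "(\<lambda>u. fbm_covariance H (a u) (a v))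
      = (\<lambda>u. a u powr (2 * H) / 2 + (a v powr (2 * H) / 2 + (- 1 / 2) * incr_var u v))"
    unfolding fbm_covariance_def incr_var_def by (simp add: field_simps)
  have "a u \<noteq> 0" for u using a_pos[of u] by simp
  then have "continuous_on {t1..t2} (\<lambda>u. a u powr (2 * H) / 2)"
    by (intro continuous_intros continuous_on_a) auto
  moreover have "continuous_on {t1..t2} (\<lambda>u. (- 1 / 2) * incr_var u v)"
    by (intro continuous_intros continuous_on_incr_var)
  ultimately have "exp_stieltjes \<alpha> t1 t2 (\<lambda>u. fbm_covariance H (a u) (a v))
      = exp_stieltjes \<alpha> t1 t2 (\<lambda>u. a u powr (2 * H) / 2) + (- 1 / 2) * exp_stieltjes \<alpha> t1 t2 (\<lambda>u. incr_var u v)"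
    unfolding cov
    by (simp only: exp_stieltjes_add continuous_on_add continuous_on_const exp_stieltjes_const[OF t]
        exp_stieltjes_cmult add_0)
  moreover have "exp_stieltjes \<alpha> t1 t2 (\<lambda>u. incr_var u v) = integral {t1..t2} (\<lambda>u. exp (- \<alpha> * u) * incr_var_du u v)"
    by (rule integral_unique[symmetric], rule exp_stieltjes_has_integral[OF t, of "{v}"])
      (auto intro: continuous_on_incr_var incr_var_deriv)
  ultimately show ?thesis by simp
qed

lemma has_integral_r_kernel:
  assumes s: "s1 \<le> s2"
  shows "((\<lambda>v. r_kernel \<alpha> H u v) has_integral
      - exp (- \<alpha> * u) * exp_stieltjes \<alpha> s1 s2 (incr_var_du u) / 2) {s1..s2}"
proof -
  have "((\<lambda>v. exp (- \<alpha> * v) * incr_var_dudv u v) has_integral exp_stieltjes \<alpha> s1 s2 (incr_var_du u)) {s1..s2}"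
    by (rule exp_stieltjes_has_integral[OF s, of "{u}"])
      (auto intro: continuous_on_uncurry_fix1[OF continuous_on_incr_var_du] incr_var_du_deriv)
  from has_integral_mult_right[OF this, of "- exp (- \<alpha> * u) / 2"]
  have "((\<lambda>v. - exp (- \<alpha> * u) / 2 * (exp (- \<alpha> * v) * incr_var_dudv u v)) has_integral
      - exp (- \<alpha> * u) * exp_stieltjes \<alpha> s1 s2 (incr_var_du u) / 2) {s1..s2}"
    by simp
  moreover have "r_kernel \<alpha> H u v = - exp (- \<alpha> * u) / 2 * (exp (- \<alpha> * v) * incr_var_dudv u v)" for v
    using exp_exp_incr_var_dudv[of u v] by simp
  ultimately show ?thesis by simp
qed

lemma r_kernel_nonneg: "r_kernel \<alpha> H u v \<ge> 0"
  unfolding r_kernel_def C_alpha_H_def using H_gt by simp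

lemma exp_stieltjes_fbm_covariance_eq_kernel_integral:
  assumes t: "t1 \<le> t2" and s: "s1 \<le> s2"
  shows "exp_stieltjes \<alpha> s1 s2 (\<lambda>v. exp_stieltjes \<alpha> t1 t2 (\<lambda>u. fbm_covariance H (a u) (a v)))
    = (LBINT u=t1..t2. (LBINT v=s1..s2. r_kernel \<alpha> H u v))"
proof -
  define W where "W u v = exp (- \<alpha> * u) * incr_var_du u v" for u v
  have Wc: "continuous_on UNIV (\<lambda>(u, v). W u v)"
    using continuous_on_incr_var_du unfolding W_def case_prod_unfold by (intro continuous_intros)
  have "continuous_on UNIV (\<lambda>(v, u). W u v)"
    using continuous_on_compose2[OF Wc continuous_on_swap] by (simp add: case_prod_unfold)
  then have "continuous_on {s1..s2} (\<lambda>v. (- 1 / 2) * integral {t1..t2} (\<lambda>u. W u v))"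
    by (intro continuous_intros continuous_on_integral_uncurry)
  then have "exp_stieltjes \<alpha> s1 s2 (\<lambda>v. exp_stieltjes \<alpha> t1 t2 (\<lambda>u. fbm_covariance H (a u) (a v)))
      = (- 1 / 2) * exp_stieltjes \<alpha> s1 s2 (\<lambda>v. integral {t1..t2} (\<lambda>u. W u v))"
    unfolding exp_stieltjes_fbm_covariance[OF t] W_def[symmetric]
    by (simp only: exp_stieltjes_add[OF continuous_on_const] exp_stieltjes_const[OF s]
        exp_stieltjes_cmult add_0)
  also have "\<dots> = integral {t1..t2} (\<lambda>u. (- 1 / 2) * exp_stieltjes \<alpha> s1 s2 (W u))"
    unfolding exp_stieltjes_integral_swap[OF Wc] by simp
  also have "\<dots> = integral {t1..t2} (\<lambda>u. integral {s1..s2} (\<lambda>v. r_kernel \<alpha> H u v))"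
    unfolding W_def exp_stieltjes_cmult integral_unique[OF has_integral_r_kernel[OF s]] by simp
  also have "\<dots> = (LBINT u=t1..t2. (LBINT v=s1..s2. r_kernel \<alpha> H u v))"
  proof -
    have inner: "(LBINT v=s1..s2. r_kernel \<alpha> H u v) = integral {s1..s2} (\<lambda>v. r_kernel \<alpha> H u v)" for u
      using has_integral_r_kernel[OF s]
      by (intro interval_integral_eq_integral_nonneg[OF s] r_kernel_nonneg)
        (auto simp: r_kernel_def)
    have "continuous_on {t1..t2} (\<lambda>u. - exp (- \<alpha> * u) * exp_stieltjes \<alpha> s1 s2 (incr_var_du u) / 2)"
      by (intro continuous_intros exp_stieltjes_continuous_param continuous_on_incr_var_du) simp
    then have "continuous_on {t1..t2} (\<lambda>u. integral {s1..s2} (\<lambda>v. r_kernel \<alpha> H u v))"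
      by (simp add: integral_unique[OF has_integral_r_kernel[OF s]])
    then show ?thesis
      unfolding inner by (intro interval_integral_eq_integral[symmetric] t borel_integrable_atLeastAtMost')
  qed
  finally show ?thesis .
qed

end

section \<open>Expectations of pathwise integrals\<close>

lemma floor_grid_tendsto: "(\<lambda>n. real_of_int \<lfloor>v * real (Suc n)\<rfloor> / real (Suc n)) \<longlonglongrightarrow> v"
proof (rule tendsto_sandwich[where f="\<lambda>n. v - 1 / real (Suc n)" and h="\<lambda>n. v"])
  show "\<forall>\<^sub>F n in sequentially. v - 1 / real (Suc n) \<le> real_of_int \<lfloor>v * real (Suc n)\<rfloor> / real (Suc n)"
  proof (intro always_eventually allI)
    fix n
    define N where "N = real (Suc n)"
    have N: "N > 0" unfolding N_def by simp
    have i: "v * N - 1 \<le> real_of_int \<lfloor>v * N\<rfloor>" by linarith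
    have "v - 1 / N = (v * N - 1) / N" using N by (simp add: field_simps)
    also have "\<dots> \<le> real_of_int \<lfloor>v * N\<rfloor> / N" by (rule divide_right_mono[OF i]) (use N in simp)
    finally show "v - 1 / real (Suc n) \<le> real_of_int \<lfloor>v * real (Suc n)\<rfloor> / real (Suc n)"
      unfolding N_def .
  qed
  show "\<forall>\<^sub>F n in sequentially. real_of_int \<lfloor>v * real (Suc n)\<rfloor> / real (Suc n) \<le> v"
  proof (intro always_eventually allI)
    fix n
    have "real_of_int \<lfloor>v * real (Suc n)\<rfloor> \<le> v * real (Suc n)" by linarith
    then show "real_of_int \<lfloor>v * real (Suc n)\<rfloor> / real (Suc n) \<le> v"
      by (simp add: field_simps)
  qed
  show "(\<lambda>n. v - 1 / real (Suc n)) \<longlonglongrightarrow> v"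
    using tendsto_diff[OF tendsto_const[of v] LIMSEQ_inverse_real_of_nat] by (simp add: inverse_eq_divide)
qed simp

lemma measurable_pair_of_continuous_paths:
  fixes q :: "real \<Rightarrow> 'a \<Rightarrow> real"
  assumes qm: "\<And>v. q v \<in> borel_measurable M"
    and qc: "\<And>\<omega>. \<omega> \<in> space M \<Longrightarrow> continuous_on UNIV (\<lambda>v. q v \<omega>)"
  shows "(\<lambda>(v, \<omega>). q v \<omega>) \<in> borel_measurable (lborel \<Otimes>\<^sub>M M)"
proof (rule borel_measurable_LIMSEQ_real)
  define g where "g n x = q (real_of_int \<lfloor>fst x * real (Suc n)\<rfloor> / real (Suc n)) (snd x)" for n x
  show "(\<lambda>n. g n x) \<longlonglongrightarrow> (\<lambda>(v, \<omega>). q v \<omega>) x" if x: "x \<in> space (lborel \<Otimes>\<^sub>M M)" for x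
  proof -
    obtain v \<omega> where xe: "x = (v, \<omega>)" by (cases x)
    have om: "\<omega> \<in> space M" using x xe by (simp add: space_pair_measure)
    have lim: "(\<lambda>n. real_of_int \<lfloor>v * real (Suc n)\<rfloor> / real (Suc n)) \<longlonglongrightarrow> v"
      by (rule floor_grid_tendsto)
    have "isCont (\<lambda>v. q v \<omega>) v" using qc[OF om] by (simp add: continuous_on_eq_continuous_at)
    then have "(\<lambda>n. q (real_of_int \<lfloor>v * real (Suc n)\<rfloor> / real (Suc n)) \<omega>) \<longlonglongrightarrow> q v \<omega>"
      using isCont_tendsto_compose lim by blast
    then show ?thesis unfolding g_def xe by simp
  qed
  show "g n \<in> borel_measurable (lborel \<Otimes>\<^sub>M M)" for n
  proof -
    have "(\<lambda>x. (\<lambda>i::int. q (real_of_int i / real (Suc n)) (snd x)) (\<lfloor>fst x * real (Suc n)\<rfloor>) ) \<in> borel_measurable (lborel \<Otimes>\<^sub>M M)"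
    proof (rule measurable_compose_countable[where f="\<lambda>i x. q (real_of_int i / real (Suc n)) (snd x)"])
      show "(\<lambda>x. q (real_of_int i / real (Suc n)) (snd x)) \<in> borel_measurable (lborel \<Otimes>\<^sub>M M)" for i
        by (rule measurable_compose[OF measurable_snd qm])
      show "(\<lambda>x. \<lfloor>fst x * real (Suc n)\<rfloor>) \<in> measurable (lborel \<Otimes>\<^sub>M M) (count_space UNIV)"
        by measurable
    qed
    then show ?thesis unfolding g_def by simp
  qed
qed



lemma lborel_integral_indicator_eq_integral:
  fixes h :: "real \<Rightarrow> real"
  assumes "continuous_on {c..d} h"
  shows "(\<integral>v. indicator {c..d} v * h v \<partial>lborel) = integral {c..d} h"
  using set_borel_integral_eq_integral(2)[OF borel_integrable_atLeastAtMost'[OF assms]]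
  unfolding set_lebesgue_integral_def by simp

lemma borel_measurable_pathwise_integral:
  fixes q :: "real \<Rightarrow> 'a \<Rightarrow> real" and w :: "real \<Rightarrow> real"
  assumes M: "sigma_finite_measure M"
    and qm: "(\<lambda>(v, \<omega>). q v \<omega>) \<in> borel_measurable (lborel \<Otimes>\<^sub>M M)"
    and wc: "continuous_on UNIV w"
    and qc: "\<And>\<omega>. \<omega> \<in> space M \<Longrightarrow> continuous_on {c..d} (\<lambda>v. q v \<omega>)"
  shows "(\<lambda>\<omega>. integral {c..d} (\<lambda>v. w v * q v \<omega>)) \<in> borel_measurable M"
proof -
  interpret sigma_finite_measure M by (rule M)
  interpret pair_sigma_finite lborel M by unfold_locales
  have [measurable]: "w \<in> borel_measurable borel" by (rule borel_measurable_continuous_onI[OF wc])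
  have [measurable]: "(\<lambda>(\<omega>, v). q v \<omega>) \<in> borel_measurable (M \<Otimes>\<^sub>M lborel)"
    using measurable_pair_swap[OF qm] by (simp add: case_prod_unfold)
  have "(\<lambda>\<omega>. \<integral>v. indicator {c..d} v * (w v * q v \<omega>) \<partial>lborel) \<in> borel_measurable M"
    by measurable
  then show ?thesis
    by (rule measurable_cong[THEN iffD1, rotated])
      (intro lborel_integral_indicator_eq_integral continuous_intros continuous_on_subset[OF wc] qc,
        auto)
qed

context
  fixes M :: "'a measure" and q :: "real \<Rightarrow> 'a \<Rightarrow> real" and F :: "'a \<Rightarrow> real" and w :: "real \<Rightarrow> real"
    and c d W B :: real
  assumes M: "sigma_finite_measure M"
    and qm[measurable]: "(\<lambda>(v, \<omega>). q v \<omega>) \<in> borel_measurable (lborel \<Otimes>\<^sub>M M)"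
    and Fm[measurable]: "F \<in> borel_measurable M"
    and wc: "continuous_on UNIV w" and wW: "\<And>v. v \<in> {c..d} \<Longrightarrow> \<bar>w v\<bar> \<le> W"
    and Fi: "\<And>v. v \<in> {c..d} \<Longrightarrow> integrable M (\<lambda>\<omega>. F \<omega> * q v \<omega>)"
    and FB: "\<And>v. v \<in> {c..d} \<Longrightarrow> (\<integral>\<omega>. \<bar>F \<omega> * q v \<omega>\<bar> \<partial>M) \<le> B"
begin

lemma expectation_abs_pathwise_integrand_le:
  "(\<integral>\<omega>. \<bar>indicator {c..d} v * (w v * (F \<omega> * q v \<omega>))\<bar> \<partial>M) \<le> indicator {c..d} v * (W * B)"
proof (cases "v \<in> {c..d}")
  case True
  have "(\<integral>\<omega>. \<bar>indicator {c..d} v * (w v * (F \<omega> * q v \<omega>))\<bar> \<partial>M)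
      = \<bar>w v\<bar> * (\<integral>\<omega>. \<bar>F \<omega> * q v \<omega>\<bar> \<partial>M)"
    using True by (simp add: abs_mult)
  also have "\<dots> \<le> W * B"
    using True wW FB order_trans[OF abs_ge_zero wW] by (intro mult_mono) (auto intro: integral_nonneg_AE)
  finally show ?thesis using True by simp
qed simp

lemma integrable_pathwise_integrand:
  assumes cd: "c \<le> d"
  shows "integrable (lborel \<Otimes>\<^sub>M M) (\<lambda>(v, \<omega>). indicator {c..d} v * (w v * (F \<omega> * q v \<omega>)))"
proof -
  interpret sigma_finite_measure M by (rule M)
  interpret pair_sigma_finite lborel M by unfold_locales
  have [measurable]: "w \<in> borel_measurable borel" by (rule borel_measurable_continuous_onI[OF wc])
  have "0 \<le> (\<integral>\<omega>. \<bar>w c * (F \<omega> * q c \<omega>)\<bar> \<partial>M)"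
    by (rule integral_nonneg_AE) auto
  also have "\<dots> \<le> W * B"
    using expectation_abs_pathwise_integrand_le[of c] cd by simp
  finally have WB: "0 \<le> W * B" .
  show ?thesis
  proof (rule Fubini_integrable)
    show "integrable lborel (\<lambda>v. \<integral>\<omega>. norm ((\<lambda>(v, \<omega>). indicator {c..d} v * (w v * (F \<omega> * q v \<omega>))) (v, \<omega>)) \<partial>M)"
    proof (rule Bochner_Integration.integrable_bound[where f="\<lambda>v. indicator {c..d} v * (W * B)"])
      show "integrable lborel (\<lambda>v. indicator {c..d} v * (W * B))"
        by (intro integrable_mult_left) (simp add: cd)
      show "AE v in lborel. norm (\<integral>\<omega>. norm ((\<lambda>(v, \<omega>). indicator {c..d} v * (w v * (F \<omega> * q v \<omega>))) (v, \<omega>)) \<partial>M)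
          \<le> norm (indicator {c..d} v * (W * B))"
        using expectation_abs_pathwise_integrand_le WB by (intro AE_I2) (simp add: integral_nonneg_AE)
    qed measurable
    show "AE v in lborel. integrable M (\<lambda>\<omega>. (\<lambda>(v, \<omega>). indicator {c..d} v * (w v * (F \<omega> * q v \<omega>))) (v, \<omega>))"
      using Fi by (intro AE_I2) (auto simp: indicator_def)
  qed measurable
qed

lemma expectation_mult_pathwise_integral:
  assumes cd: "c \<le> d" and qc: "\<And>\<omega>. \<omega> \<in> space M \<Longrightarrow> continuous_on {c..d} (\<lambda>v. q v \<omega>)"
  shows "integrable M (\<lambda>\<omega>. F \<omega> * integral {c..d} (\<lambda>v. w v * q v \<omega>))"
    and "(\<integral>\<omega>. F \<omega> * integral {c..d} (\<lambda>v. w v * q v \<omega>) \<partial>M)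
           = integral {c..d} (\<lambda>v. w v * (\<integral>\<omega>. F \<omega> * q v \<omega> \<partial>M))"
    and "(\<integral>\<omega>. \<bar>F \<omega> * integral {c..d} (\<lambda>v. w v * q v \<omega>)\<bar> \<partial>M) \<le> (d - c) * (W * B)"
proof -
  interpret sigma_finite_measure M by (rule M)
  interpret pair_sigma_finite lborel M by unfold_locales
  define f where "f v \<omega> = indicator {c..d} v * (w v * (F \<omega> * q v \<omega>))" for v \<omega>
  have f_int: "integrable (lborel \<Otimes>\<^sub>M M) (\<lambda>(v, \<omega>). f v \<omega>)"
    unfolding f_def by (rule integrable_pathwise_integrand[OF cd])
  have f_abs_int: "integrable (lborel \<Otimes>\<^sub>M M) (\<lambda>(v, \<omega>). \<bar>f v \<omega>\<bar>)"
    using Bochner_Integration.integrable_abs[OF f_int] by (simp add: case_prod_unfold)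
  have f_lborel: "(\<integral>v. f v \<omega> \<partial>lborel) = F \<omega> * integral {c..d} (\<lambda>v. w v * q v \<omega>)"
    if "\<omega> \<in> space M" for \<omega>
    using lborel_integral_indicator_eq_integral[of c d "\<lambda>v. w v * q v \<omega>"] that
    unfolding f_def by (simp add: mult.left_commute continuous_intros continuous_on_subset[OF wc] qc)
  have f_M: "integrable lborel (\<lambda>v. indicator {c..d} v * (w v * (\<integral>\<omega>. F \<omega> * q v \<omega> \<partial>M)))"
    "(\<integral>\<omega>. f v \<omega> \<partial>M) = indicator {c..d} v * (w v * (\<integral>\<omega>. F \<omega> * q v \<omega> \<partial>M))" for v
    using integrable_fst[OF f_int] unfolding f_def by simp_all
  show int: "integrable M (\<lambda>\<omega>. F \<omega> * integral {c..d} (\<lambda>v. w v * q v \<omega>))"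
    using integrable_snd[OF f_int] by (rule Bochner_Integration.integrable_cong[THEN iffD1, OF refl f_lborel, rotated])
  have "(\<integral>\<omega>. F \<omega> * integral {c..d} (\<lambda>v. w v * q v \<omega>) \<partial>M) = (\<integral>\<omega>. (\<integral>v. f v \<omega> \<partial>lborel) \<partial>M)"
    by (intro Bochner_Integration.integral_cong refl f_lborel[symmetric])
  also have "\<dots> = (\<integral>v. indicator {c..d} v * (w v * (\<integral>\<omega>. F \<omega> * q v \<omega> \<partial>M)) \<partial>lborel)"
    unfolding Fubini_integral[OF f_int] f_M(2) ..
  also have "\<dots> = integral {c..d} (\<lambda>v. w v * (\<integral>\<omega>. F \<omega> * q v \<omega> \<partial>M))"
  proof -
    have "set_integrable lborel {c..d} (\<lambda>v. w v * (\<integral>\<omega>. F \<omega> * q v \<omega> \<partial>M))"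
      using f_M(1) unfolding set_integrable_def by simp
    from set_borel_integral_eq_integral(2)[OF this] show ?thesis
      unfolding set_lebesgue_integral_def by simp
  qed
  finally show "(\<integral>\<omega>. F \<omega> * integral {c..d} (\<lambda>v. w v * q v \<omega>) \<partial>M)
      = integral {c..d} (\<lambda>v. w v * (\<integral>\<omega>. F \<omega> * q v \<omega> \<partial>M))" .
  have "(\<integral>\<omega>. \<bar>F \<omega> * integral {c..d} (\<lambda>v. w v * q v \<omega>)\<bar> \<partial>M) \<le> (\<integral>\<omega>. (\<integral>v. \<bar>f v \<omega>\<bar> \<partial>lborel) \<partial>M)"
  proof (rule integral_mono)
    show "integrable M (\<lambda>\<omega>. \<integral>v. \<bar>f v \<omega>\<bar> \<partial>lborel)"
      using integrable_snd[OF f_abs_int] by simp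
    show "\<bar>F \<omega> * integral {c..d} (\<lambda>v. w v * q v \<omega>)\<bar> \<le> (\<integral>v. \<bar>f v \<omega>\<bar> \<partial>lborel)"
      if "\<omega> \<in> space M" for \<omega>
      using integral_norm_bound[of lborel "\<lambda>v. f v \<omega>"] f_lborel[OF that] by simp
  qed (use int in simp)
  also have "\<dots> = (\<integral>v. (\<integral>\<omega>. \<bar>f v \<omega>\<bar> \<partial>M) \<partial>lborel)"
    using Fubini_integral[OF f_abs_int] by simp
  also have "\<dots> \<le> (\<integral>v. indicator {c..d} v * (W * B) \<partial>lborel)"
    using integrable_fst[OF f_abs_int] expectation_abs_pathwise_integrand_le cd
    unfolding f_def by (intro integral_mono) (auto intro!: integrable_mult_left)
  also have "\<dots> = (d - c) * (W * B)" using cd by simp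
  finally show "(\<integral>\<omega>. \<bar>F \<omega> * integral {c..d} (\<lambda>v. w v * q v \<omega>)\<bar> \<partial>M) \<le> (d - c) * (W * B)" .
qed

end

section \<open>The time-changed fractional Brownian motion\<close>

lemma abs_mult_le_half_sum_squares: "\<bar>x * y\<bar> \<le> (x * x + y * y) / 2" for x y :: real
  using sum_squares_bound[of "\<bar>x\<bar>" "\<bar>y\<bar>"] by (simp add: abs_mult power2_eq_square)

locale time_changed_fbm = exp_time_change \<alpha> H for \<alpha> H +
  fixes M :: "'a measure" and Z :: "real \<Rightarrow> 'a \<Rightarrow> real"
  assumes fbm: "continuous_fbm M H Z"
begin

definition X where "X u \<omega> = Z (a u) \<omega>"

sublocale prob_space M
  using fbm unfolding continuous_fbm_def by blast

lemma X_measurable[measurable]: "X u \<in> borel_measurable M"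
  using fbm less_imp_le[OF a_pos[of u]] unfolding continuous_fbm_def X_def[abs_def] by blast

lemma continuous_on_X: "\<omega> \<in> space M \<Longrightarrow> continuous_on S (\<lambda>u. X u \<omega>)"
  using fbm unfolding continuous_fbm_def X_def
  by (auto intro!: continuous_on_compose2[OF _ continuous_on_a] less_imp_le[OF a_pos])

lemma expectation_X_mult: "(\<integral>\<omega>. X u \<omega> * X v \<omega> \<partial>M) = fbm_covariance H (a u) (a v)"
  using fbm less_imp_le[OF a_pos[of u]] less_imp_le[OF a_pos[of v]]
  unfolding continuous_fbm_def X_def fbm_covariance_def by simp

lemma expectation_X_sq: "(\<integral>\<omega>. X u \<omega> * X u \<omega> \<partial>M) = a u powr (2 * H)"
  unfolding expectation_X_mult fbm_covariance_def by simp

lemma integrable_X_sq: "integrable M (\<lambda>\<omega>. X u \<omega> * X u \<omega>)"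
proof (rule ccontr)
  \<comment> \<open>a non-integrable function has Bochner integral \<open>0\<close>, but the prescribed second moment is positive\<close>
  assume "\<not> ?thesis"
  then have "(\<integral>\<omega>. X u \<omega> * X u \<omega> \<partial>M) = 0" by (rule not_integrable_integral_eq)
  with expectation_X_sq[of u] a_pos[of u] show False by simp
qed

lemma integrable_X_mult: "integrable M (\<lambda>\<omega>. X u \<omega> * X v \<omega>)"
proof (rule Bochner_Integration.integrable_bound)
  show "integrable M (\<lambda>\<omega>. (X u \<omega> * X u \<omega> + X v \<omega> * X v \<omega>) / 2)"
    by (intro integrable_divide Bochner_Integration.integrable_add integrable_X_sq)
  show "AE \<omega> in M. norm (X u \<omega> * X v \<omega>) \<le> norm ((X u \<omega> * X u \<omega> + X v \<omega> * X v \<omega>) / 2)"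
    using abs_mult_le_half_sum_squares by (intro AE_I2) (simp add: order_trans[OF _ abs_ge_self])
qed simp

lemma expectation_abs_X_mult_le:
  assumes "u \<le> T" "v \<le> T"
  shows "(\<integral>\<omega>. \<bar>X u \<omega> * X v \<omega>\<bar> \<partial>M) \<le> a T powr (2 * H)"
proof -
  have "(\<integral>\<omega>. \<bar>X u \<omega> * X v \<omega>\<bar> \<partial>M) \<le> (\<integral>\<omega>. (X u \<omega> * X u \<omega> + X v \<omega> * X v \<omega>) / 2 \<partial>M)"
    by (intro integral_mono Bochner_Integration.integrable_abs integrable_X_mult abs_mult_le_half_sum_squares
        integrable_divide Bochner_Integration.integrable_add integrable_X_sq)
  also have "\<dots> = (a u powr (2 * H) + a v powr (2 * H)) / 2"
    by (simp add: integrable_X_sq expectation_X_sq)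
  also have "\<dots> \<le> (a T powr (2 * H) + a T powr (2 * H)) / 2"
    using assms a_mono a_pos H_pos by (intro divide_right_mono add_mono powr_mono2) (auto intro: less_imp_le)
  finally show ?thesis by simp
qed

lemma measurable_X_pair[measurable]: "(\<lambda>(v, \<omega>). X v \<omega>) \<in> borel_measurable (lborel \<Otimes>\<^sub>M M)"
  by (intro measurable_pair_of_continuous_paths X_measurable continuous_on_X)

definition Y_incr where "Y_incr c d \<omega> = exp_stieltjes \<alpha> c d (\<lambda>u. X u \<omega>)"

lemma Y_alpha_diff:
  assumes "\<omega> \<in> space M" "0 \<le> c" "c \<le> d"
  shows "Y_alpha \<alpha> H Z d \<omega> - Y_alpha \<alpha> H Z c \<omega> = Y_incr c d \<omega>"
proof -
  have Y: "Y_alpha \<alpha> H Z t \<omega> = Y_incr 0 t \<omega>" if "0 \<le> t" for t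
    unfolding Y_alpha_def Y_incr_def X_def[symmetric]
    by (intro rs_integral_exp_eq_exp_stieltjes that continuous_on_X assms(1))
  show ?thesis
    using assms exp_stieltjes_combine[of 0 c d, OF _ _ continuous_on_X[OF assms(1)]]
    unfolding Y[OF assms(2)] Y[OF order_trans[OF assms(2,3)]] Y_incr_def by simp
qed

lemma Y_incr_mult_eq:
  "Y_incr c d \<omega> * G = exp (- \<alpha> * d) * (G * X d \<omega>) - exp (- \<alpha> * c) * (G * X c \<omega>)
     + \<alpha> * (G * integral {c..d} (\<lambda>u. exp (- \<alpha> * u) * X u \<omega>))"
  unfolding Y_incr_def exp_stieltjes_def by (simp add: algebra_simps)

lemma abs_Y_incr_mult_le:
  "\<bar>Y_incr c d \<omega> * G\<bar> \<le> exp (- \<alpha> * d) * \<bar>G * X d \<omega>\<bar> + exp (- \<alpha> * c) * \<bar>G * X c \<omega>\<bar>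
     + \<alpha> * \<bar>G * integral {c..d} (\<lambda>u. exp (- \<alpha> * u) * X u \<omega>)\<bar>"
  unfolding Y_incr_mult_eq using alpha_pos
  by (intro abs_triangle_ineq[THEN order_trans] add_mono abs_triangle_ineq4[THEN order_trans])
    (auto simp: abs_mult)

lemma borel_measurable_Y_incr[measurable]: "Y_incr c d \<in> borel_measurable M"
proof -
  have [measurable]: "(\<lambda>\<omega>. integral {c..d} (\<lambda>u. exp (- \<alpha> * u) * X u \<omega>)) \<in> borel_measurable M"
    by (intro borel_measurable_pathwise_integral measurable_X_pair continuous_on_X continuous_intros)
      unfold_locales
  show ?thesis unfolding Y_incr_def[abs_def] exp_stieltjes_def by measurable
qed

lemma expectation_Y_incr_mult:
  assumes cd: "c \<le> d" and Gm[measurable]: "G \<in> borel_measurable M"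
    and Gi: "\<And>u. u \<in> {c..d} \<Longrightarrow> integrable M (\<lambda>\<omega>. G \<omega> * X u \<omega>)"
    and GB: "\<And>u. u \<in> {c..d} \<Longrightarrow> (\<integral>\<omega>. \<bar>G \<omega> * X u \<omega>\<bar> \<partial>M) \<le> B"
  shows "integrable M (\<lambda>\<omega>. Y_incr c d \<omega> * G \<omega>)"
    and "(\<integral>\<omega>. Y_incr c d \<omega> * G \<omega> \<partial>M) = exp_stieltjes \<alpha> c d (\<lambda>u. \<integral>\<omega>. G \<omega> * X u \<omega> \<partial>M)"
    and "(\<integral>\<omega>. \<bar>Y_incr c d \<omega> * G \<omega>\<bar> \<partial>M) \<le> (exp (- \<alpha> * d) + exp (- \<alpha> * c) + \<alpha> * (d - c) * exp (- \<alpha> * c)) * B"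
proof -
  define I where "I \<omega> = G \<omega> * integral {c..d} (\<lambda>u. exp (- \<alpha> * u) * X u \<omega>)" for \<omega>
  have exp_le: "\<bar>exp (- \<alpha> * u)\<bar> \<le> exp (- \<alpha> * c)" if "u \<in> {c..d}" for u
    using that alpha_pos by (simp add: mult_left_mono)
  have fin: "sigma_finite_measure M" by unfold_locales
  have wc: "continuous_on UNIV (\<lambda>u. exp (- \<alpha> * u))" by (intro continuous_intros)
  note fubini = expectation_mult_pathwise_integral[OF fin measurable_X_pair Gm wc exp_le Gi GB cd continuous_on_X,
      folded I_def]
  have cd': "c \<in> {c..d}" "d \<in> {c..d}" using cd by auto
  have eq: "(\<lambda>\<omega>. Y_incr c d \<omega> * G \<omega>)
      = (\<lambda>\<omega>. exp (- \<alpha> * d) * (G \<omega> * X d \<omega>) - exp (- \<alpha> * c) * (G \<omega> * X c \<omega>) + \<alpha> * I \<omega>)"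
    unfolding Y_incr_mult_eq I_def ..
  have iI: "integrable M I" by (rule fubini(1))
  have EI: "(\<integral>\<omega>. I \<omega> \<partial>M) = integral {c..d} (\<lambda>u. exp (- \<alpha> * u) * (\<integral>\<omega>. G \<omega> * X u \<omega> \<partial>M))"
    using fubini(2) unfolding I_def .
  show iYG: "integrable M (\<lambda>\<omega>. Y_incr c d \<omega> * G \<omega>)"
    unfolding eq using Gi cd' iI by auto
  show "(\<integral>\<omega>. Y_incr c d \<omega> * G \<omega> \<partial>M) = exp_stieltjes \<alpha> c d (\<lambda>u. \<integral>\<omega>. G \<omega> * X u \<omega> \<partial>M)"
    unfolding eq exp_stieltjes_def using Gi cd' iI
    by (simp add: EI)
  have "(\<integral>\<omega>. \<bar>Y_incr c d \<omega> * G \<omega>\<bar> \<partial>M)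
      \<le> (\<integral>\<omega>. exp (- \<alpha> * d) * \<bar>G \<omega> * X d \<omega>\<bar> + exp (- \<alpha> * c) * \<bar>G \<omega> * X c \<omega>\<bar> + \<alpha> * \<bar>I \<omega>\<bar> \<partial>M)"
  proof (rule integral_mono)
    show "integrable M (\<lambda>\<omega>. \<bar>Y_incr c d \<omega> * G \<omega>\<bar>)"
      using iYG by (rule Bochner_Integration.integrable_abs)
    show "integrable M (\<lambda>\<omega>. exp (- \<alpha> * d) * \<bar>G \<omega> * X d \<omega>\<bar> + exp (- \<alpha> * c) * \<bar>G \<omega> * X c \<omega>\<bar>
        + \<alpha> * \<bar>I \<omega>\<bar>)"
      using Gi cd' iI by auto
  qed (unfold I_def, rule abs_Y_incr_mult_le)
  also have "\<dots> = exp (- \<alpha> * d) * (\<integral>\<omega>. \<bar>G \<omega> * X d \<omega>\<bar> \<partial>M) + exp (- \<alpha> * c) * (\<integral>\<omega>. \<bar>G \<omega> * X c \<omega>\<bar> \<partial>M)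
      + \<alpha> * (\<integral>\<omega>. \<bar>I \<omega>\<bar> \<partial>M)"
    using Gi cd' iI by simp
  also have "\<dots> \<le> exp (- \<alpha> * d) * B + exp (- \<alpha> * c) * B + \<alpha> * ((d - c) * (exp (- \<alpha> * c) * B))"
    using GB cd' fubini(3) alpha_pos
    by (intro add_mono mult_left_mono) (auto intro: continuous_intros)
  finally show "(\<integral>\<omega>. \<bar>Y_incr c d \<omega> * G \<omega>\<bar> \<partial>M) \<le> (exp (- \<alpha> * d) + exp (- \<alpha> * c) + \<alpha> * (d - c) * exp (- \<alpha> * c)) * B"
    by (simp add: algebra_simps)
qed

lemma expectation_Y_incr_mult_Y_incr:
  assumes t: "t1 \<le> t2" and s: "s1 \<le> s2"
  shows "(\<integral>\<omega>. Y_incr t1 t2 \<omega> * Y_incr s1 s2 \<omega> \<partial>M)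
    = exp_stieltjes \<alpha> s1 s2 (\<lambda>v. exp_stieltjes \<alpha> t1 t2 (\<lambda>u. fbm_covariance H (a u) (a v)))"
proof -
  have "(\<integral>\<omega>. \<bar>X v \<omega> * X u \<omega>\<bar> \<partial>M) \<le> a T powr (2 * H)"
    if "u \<in> {t1..t2}" "t2 \<le> T" "v \<le> T" for u v T
    using that by (intro expectation_abs_X_mult_le) auto
  note Y_t_X = expectation_Y_incr_mult[OF t X_measurable integrable_X_mult this]
  have "(\<lambda>v. \<integral>\<omega>. Y_incr t1 t2 \<omega> * X v \<omega> \<partial>M)
      = (\<lambda>v. exp_stieltjes \<alpha> t1 t2 (\<lambda>u. fbm_covariance H (a u) (a v)))"
    using Y_t_X(2)[of "max t2 v" v for v] by (simp add: expectation_X_mult fbm_covariance_commute)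
  moreover have "(\<integral>\<omega>. Y_incr s1 s2 \<omega> * Y_incr t1 t2 \<omega> \<partial>M)
      = exp_stieltjes \<alpha> s1 s2 (\<lambda>v. \<integral>\<omega>. Y_incr t1 t2 \<omega> * X v \<omega> \<partial>M)"
    using Y_t_X(1)[of "max t2 v" v for v] Y_t_X(3)[of "max t2 s2"]
    by (intro expectation_Y_incr_mult(2)[where B="(exp (- \<alpha> * t2) + exp (- \<alpha> * t1)
          + \<alpha> * (t2 - t1) * exp (- \<alpha> * t1)) * a (max t2 s2) powr (2 * H)", OF s borel_measurable_Y_incr])
      auto
  ultimately show ?thesis by (simp add: mult.commute)
qed

end

theorem proposition3p4:
  fixes M :: "'a measure" and Z :: "real \<Rightarrow> 'a \<Rightarrow> real"
    and H \<alpha> t1 t2 s1 s2 :: real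
  assumes "1/2 < H" and "H < 1"
    and "continuous_fbm M H Z"
    and "\<alpha> > 0"
    and "0 \<le> t1" and "t1 < t2" and "0 \<le> s1" and "s1 < s2"
  shows "integral\<^sup>L M (\<lambda>\<omega>. (Y_alpha \<alpha> H Z t2 \<omega> - Y_alpha \<alpha> H Z t1 \<omega>) *
                            (Y_alpha \<alpha> H Z s2 \<omega> - Y_alpha \<alpha> H Z s1 \<omega>))
         = C_alpha_H \<alpha> H *
           (LBINT u=t1..t2. (LBINT v=s1..s2.
              exp (- \<alpha> * (1 - H) * (u - v) / H) / \<bar>1 - exp (- \<alpha> * (u - v) / H)\<bar> powr (2 * (1 - H))))
       \<and> (\<forall>u v. r_kernel \<alpha> H u v = r_kernel \<alpha> H v u)"
proof -
  interpret time_changed_fbm \<alpha> H M Z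
    by unfold_locales (use assms in auto)
  have t: "t1 \<le> t2" and s: "s1 \<le> s2" using assms by auto
  have "integral\<^sup>L M (\<lambda>\<omega>. (Y_alpha \<alpha> H Z t2 \<omega> - Y_alpha \<alpha> H Z t1 \<omega>) *
      (Y_alpha \<alpha> H Z s2 \<omega> - Y_alpha \<alpha> H Z s1 \<omega>)) = (\<integral>\<omega>. Y_incr t1 t2 \<omega> * Y_incr s1 s2 \<omega> \<partial>M)"
    using assms by (intro Bochner_Integration.integral_cong) (simp_all add: Y_alpha_diff)
  also have "\<dots> = exp_stieltjes \<alpha> s1 s2 (\<lambda>v. exp_stieltjes \<alpha> t1 t2 (\<lambda>u. fbm_covariance H (a u) (a v)))"
    by (rule expectation_Y_incr_mult_Y_incr[OF t s])
  also have "\<dots> = (LBINT u=t1..t2. (LBINT v=s1..s2. r_kernel \<alpha> H u v))"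
    by (rule exp_stieltjes_fbm_covariance_eq_kernel_integral[OF t s])
  also have "\<dots> = C_alpha_H \<alpha> H * (LBINT u=t1..t2. (LBINT v=s1..s2.
      exp (- \<alpha> * (1 - H) * (u - v) / H) / \<bar>1 - exp (- \<alpha> * (u - v) / H)\<bar> powr (2 * (1 - H))))"
    unfolding r_kernel_def interval_lebesgue_integral_mult_right ..
  finally show ?thesis using r_kernel_sym by blast
qed

end
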